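(* Let $v\in\mathbb{Z}^d$ be primitive and $p$ a prime. Let $h\in H_v(\mathbb{Q}_p)\cap\mathrm{SO}_d(\mathbb{Z}_p)\mathrm{SO}_d(\mathbb{Z}[1/p])$, and write $h=c_1\gamma_1$ with $c_1\in\mathrm{SO}_d(\mathbb{Z}_p)$, $\gamma_1\in\mathrm{SO}_d(\mathbb{Z}[1/p])$, and $g_v^{-1}hg_v=c_2\gamma_2^{-1}$ with $c_2\in\mathrm{ASL}_{d-1}(\mathbb{Z}_p)$, $\gamma_2\in\mathrm{ASL}_{d-1}(\mathbb{Z}[1/p])$. Then $\gamma_1g_v\gamma_2\in\mathrm{SL}_d(\mathbb{Z})$.
   Context: For primitive $v\in\mathbb{Z}^d$: $\Lambda_v=v^\perp\cap\mathbb{Z}^d$; $H_v\le\mathrm{SO}_d$ is the stabilizer of $v$ (a $\mathbb{Q}$-algebraic group); $g_v\in\mathrm{SL}_d(\mathbb{Z})$ is a matrix whose first $d-1$ columns form a positively oriented $\mathbb{Z}$-basis of $\Lambda_v$. $\mathrm{ASL}_{d-1}=\{\begin{pmatrix}g&*\\0&1\end{pmatrix}:g\in\mathrm{SL}_{d-1}\}\le\mathrm{SL}_d$; one has $g_v^{-1}H_vg_v\le\mathrm{ASL}_{d-1}$ and $\mathrm{ASL}_{d-1}(\mathbb{Q}_p)=\mathrm{ASL}_{d-1}(\mathbb{Z}_p)\mathrm{ASL}_{d-1}(\mathbb{Z}[1/p])$, so such decompositions exist. *)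

theory Defs
  imports Complex_Main "HOL-Computational_Algebra.Factorial_Ring" "Jordan_Normal_Form.Determinant"
begin

definition pval :: "nat \<Rightarrow> rat \<Rightarrow> int" where
  "pval p q = (case quotient_of q of (a, b) \<Rightarrow>
      int (multiplicity (int p) a) - int (multiplicity (int p) b))"

definition pnorm :: "nat \<Rightarrow> rat \<Rightarrow> real" where
  "pnorm p q = (if q = 0 then 0 else real p powr (- real_of_int (pval p q)))"

definition in_Zinvp :: "nat \<Rightarrow> rat \<Rightarrow> bool" where
  "in_Zinvp p q \<longleftrightarrow> (\<exists>(a::int) (k::nat). q = of_int a / of_nat p ^ k)"

section \<open>Matrices over Q_p, modelled as p-adic Cauchy sequences of rational matrices
  (Q_p = completion of Q with respect to pnorm)\<close>

definition padic_null_seq :: "nat \<Rightarrow> (nat \<Rightarrow> rat) \<Rightarrow> bool" where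
  "padic_null_seq p x \<longleftrightarrow> (\<forall>\<epsilon>>0. \<exists>N. \<forall>k\<ge>N. pnorm p (x k) < \<epsilon>)"

definition padic_cauchy :: "nat \<Rightarrow> nat \<Rightarrow> nat \<Rightarrow> (nat \<Rightarrow> rat mat) \<Rightarrow> bool" where
  "padic_cauchy p m n X \<longleftrightarrow> (\<forall>k. X k \<in> carrier_mat m n) \<and>
     (\<forall>\<epsilon>>0. \<exists>N. \<forall>k\<ge>N. \<forall>l\<ge>N. \<forall>i<m. \<forall>j<n. pnorm p (X k $$ (i, j) - X l $$ (i, j)) < \<epsilon>)"

definition padic_eq :: "nat \<Rightarrow> nat \<Rightarrow> nat \<Rightarrow> (nat \<Rightarrow> rat mat) \<Rightarrow> (nat \<Rightarrow> rat mat) \<Rightarrow> bool" where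
  "padic_eq p m n X Y \<longleftrightarrow> (\<forall>i<m. \<forall>j<n. padic_null_seq p (\<lambda>k. X k $$ (i, j) - Y k $$ (i, j)))"

definition padic_integral :: "nat \<Rightarrow> nat \<Rightarrow> nat \<Rightarrow> (nat \<Rightarrow> rat mat) \<Rightarrow> bool" where
  "padic_integral p m n X \<longleftrightarrow> (\<exists>N. \<forall>k\<ge>N. \<forall>i<m. \<forall>j<n. pnorm p (X k $$ (i, j)) \<le> 1)"

definition SO_Qp :: "nat \<Rightarrow> nat \<Rightarrow> (nat \<Rightarrow> rat mat) \<Rightarrow> bool" where
  "SO_Qp p d X \<longleftrightarrow> padic_cauchy p d d X
     \<and> padic_eq p d d (\<lambda>k. transpose_mat (X k) * X k) (\<lambda>k. 1\<^sub>m d)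
     \<and> padic_null_seq p (\<lambda>k. det (X k) - 1)"

definition SO_Zp :: "nat \<Rightarrow> nat \<Rightarrow> (nat \<Rightarrow> rat mat) \<Rightarrow> bool" where
  "SO_Zp p d X \<longleftrightarrow> SO_Qp p d X \<and> padic_integral p d d X"

definition SO_Zinvp :: "nat \<Rightarrow> nat \<Rightarrow> rat mat \<Rightarrow> bool" where
  "SO_Zinvp p d A \<longleftrightarrow> A \<in> carrier_mat d d \<and> (\<forall>i<d. \<forall>j<d. in_Zinvp p (A $$ (i, j)))
     \<and> transpose_mat A * A = 1\<^sub>m d \<and> det A = 1"

definition H_Qp :: "nat \<Rightarrow> nat \<Rightarrow> int vec \<Rightarrow> (nat \<Rightarrow> rat mat) \<Rightarrow> bool" where
  "H_Qp p d v X \<longleftrightarrow> SO_Qp p d X \<and>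
     padic_eq p d 1 (\<lambda>k. X k * mat_of_cols d [map_vec rat_of_int v])
                    (\<lambda>k. mat_of_cols d [map_vec rat_of_int v])"

definition ASL_Qp :: "nat \<Rightarrow> nat \<Rightarrow> (nat \<Rightarrow> rat mat) \<Rightarrow> bool" where
  "ASL_Qp p d X \<longleftrightarrow> padic_cauchy p d d X
     \<and> (\<forall>j<d - 1. padic_null_seq p (\<lambda>k. X k $$ (d - 1, j)))
     \<and> padic_null_seq p (\<lambda>k. X k $$ (d - 1, d - 1) - 1)
     \<and> padic_null_seq p (\<lambda>k. det (X k) - 1)"

definition ASL_Zp :: "nat \<Rightarrow> nat \<Rightarrow> (nat \<Rightarrow> rat mat) \<Rightarrow> bool" where
  "ASL_Zp p d X \<longleftrightarrow> ASL_Qp p d X \<and> padic_integral p d d X"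

definition ASL_Zinvp :: "nat \<Rightarrow> nat \<Rightarrow> rat mat \<Rightarrow> bool" where
  "ASL_Zinvp p d A \<longleftrightarrow> A \<in> carrier_mat d d \<and> (\<forall>i<d. \<forall>j<d. in_Zinvp p (A $$ (i, j)))
     \<and> (\<forall>j<d - 1. A $$ (d - 1, j) = 0) \<and> A $$ (d - 1, d - 1) = 1 \<and> det A = 1"

definition primitive_vec :: "nat \<Rightarrow> int vec \<Rightarrow> bool" where
  "primitive_vec d v \<longleftrightarrow> v \<in> carrier_vec d \<and> (\<forall>c. (\<forall>i<d. c dvd v $ i) \<longrightarrow> is_unit c)"

text \<open>g is in SL_d(Z) and its first d-1 columns form a positively oriented Z-basis of
  Lambda_v = v^perp \<inter> Z^d (orientation: det(b_1,...,b_{d-1},v) > 0).\<close>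
definition is_gv :: "nat \<Rightarrow> int vec \<Rightarrow> int mat \<Rightarrow> bool" where
  "is_gv d v g \<longleftrightarrow> g \<in> carrier_mat d d \<and> det g = 1
     \<and> (\<forall>j<d - 1. col g j \<bullet> v = 0)
     \<and> (\<forall>x \<in> carrier_vec d. x \<bullet> v = 0 \<longrightarrow>
          (\<exists>c :: nat \<Rightarrow> int. \<forall>i<d. x $ i = (\<Sum>j<d - 1. c j * g $$ (i, j))))
     \<and> det (mat_of_cols d (map (col g) [0..<d - 1] @ [v])) > 0"

end

theory Submission
  imports Defs "HOL-Computational_Algebra.Squarefree"
begin

text \<open>Since \<open>c\<^sub>1\<close> is orthogonal, \<open>\<gamma>\<^sub>1 = c\<^sub>1\<^sup>T h\<close>, and since
  \<open>g\<^sub>v\<^sup>-\<^sup>1 h g\<^sub>v = c\<^sub>2 \<gamma>\<^sub>2\<^sup>-\<^sup>1\<close>, \<open>h g\<^sub>v \<gamma>\<^sub>2 = g\<^sub>v c\<^sub>2\<close>.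
  Hence \<open>\<gamma>\<^sub>1 g\<^sub>v \<gamma>\<^sub>2 = c\<^sub>1\<^sup>T g\<^sub>v c\<^sub>2\<close> has entries in \<open>\<int>\<^sub>p\<close>. Its entries
  also lie in \<open>\<int>[1/p]\<close>, and \<open>\<int>[1/p] \<inter> \<int>\<^sub>p = \<int>\<close>; its determinant is
  \<open>det \<gamma>\<^sub>1 det g\<^sub>v det \<gamma>\<^sub>2 = 1\<close>.
  Here \<open>\<rat>\<^sub>p\<close>-matrices are Cauchy sequences of rational matrices, so the equations above
  hold only up to \<^const>\<open>padic_eq\<close>; the ultrametric inequality makes products with
  bounded sequences respect \<^const>\<open>padic_eq\<close> and makes \<open>\<int>\<^sub>p\<close> closed under limits.\<close>

section \<open>The \<open>p\<close>-adic absolute value on \<open>\<rat>\<close>\<close>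

lemma rat_of_int_fraction:
  fixes x :: rat
  obtains a b :: int where "b \<noteq> 0" "x = of_int a / of_int b"
  by (metis Fract_of_int_quotient Rat_cases less_irrefl)

lemma pval_of_int_divide:
  fixes a b :: int
  assumes p: "prime p" and a: "a \<noteq> 0" and b: "b \<noteq> 0"
  shows "pval p (of_int a / of_int b) = int (multiplicity (int p) a) - int (multiplicity (int p) b)"
proof -
  obtain a' b' where q: "quotient_of (of_int a / of_int b) = (a', b')"
    by (cases "quotient_of (of_int a / of_int b :: rat)")
  have eq: "(of_int a / of_int b :: rat) = of_int a' / of_int b'" using quotient_of_div[OF q] .
  have b': "b' > 0" using quotient_of_denom_pos[OF q] .
  with eq a b have a': "a' \<noteq> 0" by auto
  have "(of_int (a * b') :: rat) = of_int (a' * b)" using eq b b' by (simp add: field_simps)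
  hence "multiplicity (int p) (a * b') = multiplicity (int p) (a' * b)" by (simp only: of_int_eq_iff)
  hence "multiplicity (int p) a + multiplicity (int p) b' = multiplicity (int p) a' + multiplicity (int p) b"
    using p a b a' b' by (simp add: prime_elem_multiplicity_mult_distrib)
  thus ?thesis unfolding pval_def q by simp
qed

lemma pval_of_int:
  assumes "prime p" "n \<noteq> 0"
  shows "pval p (of_int n) = int (multiplicity (int p) n)"
  using pval_of_int_divide[OF assms, of 1] by simp

lemma pval_uminus: "pval p (- x) = pval p x"
  unfolding pval_def rat_uminus_code by (simp add: case_prod_beta)

lemma pval_mult:
  assumes p: "prime p" and x: "x \<noteq> 0" and y: "y \<noteq> 0"
  shows "pval p (x * y) = pval p x + pval p y"
proof -
  obtain a b where ab: "b \<noteq> 0" "x = of_int a / of_int b" by (rule rat_of_int_fraction)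
  obtain c e where ce: "e \<noteq> 0" "y = of_int c / of_int e" by (rule rat_of_int_fraction)
  have "a \<noteq> 0" "c \<noteq> 0" using x y ab ce by auto
  have "x * y = of_int (a * c) / of_int (b * e)" using ab ce by simp
  hence "pval p (x * y) = int (multiplicity (int p) (a * c)) - int (multiplicity (int p) (b * e))"
    using p \<open>a \<noteq> 0\<close> \<open>c \<noteq> 0\<close> ab ce by (simp only:) (rule pval_of_int_divide, simp_all)
  thus ?thesis using p \<open>a \<noteq> 0\<close> \<open>c \<noteq> 0\<close> ab ce
    by (simp add: pval_of_int_divide prime_elem_multiplicity_mult_distrib)
qed

lemma multiplicity_add_ge_min:
  fixes p x y :: "'a :: factorial_semiring"
  assumes "x + y \<noteq> 0" "\<not> is_unit p"
  shows "min (multiplicity p x) (multiplicity p y) \<le> multiplicity p (x + y)"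
proof (rule multiplicity_geI[OF assms])
  let ?k = "min (multiplicity p x) (multiplicity p y)"
  have "p ^ ?k dvd x" "p ^ ?k dvd y" by (simp_all add: multiplicity_dvd')
  thus "p ^ ?k dvd x + y" by simp
qed

lemma pval_add_ge_min:
  assumes p: "prime p" and x: "x \<noteq> 0" and y: "y \<noteq> 0" and xy: "x + y \<noteq> 0"
  shows "min (pval p x) (pval p y) \<le> pval p (x + y)"
proof -
  obtain a b where ab: "b \<noteq> 0" "x = of_int a / of_int b" by (rule rat_of_int_fraction)
  obtain c e where ce: "e \<noteq> 0" "y = of_int c / of_int e" by (rule rat_of_int_fraction)
  have "a \<noteq> 0" "c \<noteq> 0" using x y ab ce by auto
  have sum: "x + y = of_int (a * e + c * b) / of_int (b * e)" using ab ce by (simp add: field_simps)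
  with xy have "a * e + c * b \<noteq> 0" by (metis div_0 of_int_0)
  hence "pval p (x + y) = int (multiplicity (int p) (a * e + c * b)) - int (multiplicity (int p) (b * e))"
    using p ab ce unfolding sum by (intro pval_of_int_divide) auto
  moreover have "min (multiplicity (int p) (a * e)) (multiplicity (int p) (c * b))
           \<le> multiplicity (int p) (a * e + c * b)"
    using prime_gt_1_nat[OF p] \<open>a * e + c * b \<noteq> 0\<close> by (intro multiplicity_add_ge_min) auto
  ultimately show ?thesis
    using p ab ce \<open>a \<noteq> 0\<close> \<open>c \<noteq> 0\<close>
    by (auto simp: pval_of_int_divide prime_elem_multiplicity_mult_distrib)
qed

lemma pnorm_nonneg: "pnorm p x \<ge> 0"
  unfolding pnorm_def by simp

lemma pnorm_zero [simp]: "pnorm p 0 = 0"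
  unfolding pnorm_def by simp

lemma pnorm_uminus: "pnorm p (- x) = pnorm p x"
  unfolding pnorm_def by (simp add: pval_uminus)

lemma pnorm_mult:
  assumes p: "prime p"
  shows "pnorm p (x * y) = pnorm p x * pnorm p y"
proof (cases "x = 0 \<or> y = 0")
  case False
  with p show ?thesis
    unfolding pnorm_def by (simp add: pval_mult prime_gt_0_nat powr_add[symmetric])
qed auto

lemma pnorm_add_le_max:
  assumes p: "prime p"
  shows "pnorm p (x + y) \<le> max (pnorm p x) (pnorm p y)"
proof (cases "x = 0 \<or> y = 0 \<or> x + y = 0")
  case True
  thus ?thesis using pnorm_nonneg[of p x] pnorm_nonneg[of p y] by (auto simp: le_max_iff_disj)
next
  case False
  have "p > 1" using p prime_gt_1_nat by blast
  have "real p powr - real_of_int (pval p (x + y))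
          \<le> real p powr - real_of_int (min (pval p x) (pval p y))"
    using pval_add_ge_min[OF p] False \<open>p > 1\<close> by (intro powr_mono) auto
  also have "\<dots> = max (real p powr - real_of_int (pval p x)) (real p powr - real_of_int (pval p y))"
    using \<open>p > 1\<close> by (auto simp: min_def max_def)
  finally show ?thesis using False unfolding pnorm_def by simp
qed

lemma pnorm_sum_le:
  assumes p: "prime p" and B: "B \<ge> 0" and "\<And>l. l \<in> S \<Longrightarrow> pnorm p (f l) \<le> B"
  shows "pnorm p (\<Sum>l\<in>S. f l) \<le> B"
  using assms(3)
proof (induction S rule: infinite_finite_induct)
  case (insert a F)
  have "pnorm p (\<Sum>l\<in>insert a F. f l) \<le> max (pnorm p (f a)) (pnorm p (\<Sum>l\<in>F. f l))"
    using insert.hyps pnorm_add_le_max[OF p] by simp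
  also have "\<dots> \<le> B" using insert by simp
  finally show ?case .
qed (use B in simp_all)

lemma pnorm_of_int_le_1:
  assumes p: "prime p"
  shows "pnorm p (of_int n) \<le> 1"
proof (cases "n = 0")
  case False
  have "p > 1" using p prime_gt_1_nat by blast
  hence "real p powr - real (multiplicity (int p) n) \<le> real p powr 0" by (intro powr_mono) auto
  thus ?thesis using False p unfolding pnorm_def by (simp add: pval_of_int)
qed simp

lemma pval_nonneg_if_pnorm_le_1:
  assumes p: "prime p" and q: "q \<noteq> 0" and le: "pnorm p q \<le> 1"
  shows "pval p q \<ge> 0"
proof (rule ccontr)
  assume "\<not> pval p q \<ge> 0"
  moreover have "p > 1" using p prime_gt_1_nat by blast
  ultimately have "real p powr - real_of_int (pval p q) > real p powr 0"
    by (intro powr_less_mono) auto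
  thus False using le q \<open>p > 1\<close> unfolding pnorm_def by simp
qed

section \<open>The ring \<open>\<int>[1/p]\<close>\<close>

lemma in_Zinvp_of_int: "in_Zinvp p (of_int n)"
  unfolding in_Zinvp_def by (intro exI[of _ n] exI[of _ 0]) simp

lemma in_Zinvp_add:
  assumes p: "prime p" and "in_Zinvp p x" "in_Zinvp p y"
  shows "in_Zinvp p (x + y)"
proof -
  obtain a k where x: "x = of_int a / of_nat p ^ k" using assms unfolding in_Zinvp_def by blast
  obtain b l where y: "y = of_int b / of_nat p ^ l" using assms unfolding in_Zinvp_def by blast
  have "(of_nat p :: rat) \<noteq> 0" using p by (simp add: prime_gt_0_nat)
  hence "x + y = of_int (a * int p ^ l + b * int p ^ k) / of_nat p ^ (k + l)"
    unfolding x y by (simp add: field_simps power_add)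
  thus ?thesis unfolding in_Zinvp_def by blast
qed

lemma in_Zinvp_mult:
  assumes "in_Zinvp p x" "in_Zinvp p y"
  shows "in_Zinvp p (x * y)"
proof -
  obtain a k where x: "x = of_int a / of_nat p ^ k" using assms unfolding in_Zinvp_def by blast
  obtain b l where y: "y = of_int b / of_nat p ^ l" using assms unfolding in_Zinvp_def by blast
  have "x * y = of_int (a * b) / of_nat p ^ (k + l)" unfolding x y by (simp add: power_add)
  thus ?thesis unfolding in_Zinvp_def by blast
qed

lemma in_Zinvp_sum:
  assumes p: "prime p" and "\<And>l. l \<in> S \<Longrightarrow> in_Zinvp p (f l)"
  shows "in_Zinvp p (\<Sum>l\<in>S. f l)"
  using assms(2)
  by (induction S rule: infinite_finite_induct)
     (simp_all add: in_Zinvp_add[OF p] in_Zinvp_of_int[of p 0, simplified])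

lemma in_Zinvp_mat_mult:
  assumes p: "prime p" and A: "A \<in> carrier_mat m n" and B: "B \<in> carrier_mat n r"
    and "\<forall>i<m. \<forall>j<n. in_Zinvp p (A $$ (i, j))" and "\<forall>i<n. \<forall>j<r. in_Zinvp p (B $$ (i, j))"
  shows "\<forall>i<m. \<forall>j<r. in_Zinvp p ((A * B) $$ (i, j))"
  using assms by (auto simp: scalar_prod_def intro!: in_Zinvp_sum in_Zinvp_mult)

lemma in_Zinvp_pnorm_le_1_imp_int:
  assumes p: "prime p" and z: "in_Zinvp p q" and le: "pnorm p q \<le> 1"
  shows "\<exists>n::int. q = of_int n"
proof (cases "q = 0")
  case False
  obtain a k where "q = of_int a / of_nat p ^ k" using z unfolding in_Zinvp_def by blast
  hence ak: "q = of_int a / of_int (int p ^ k)" by simp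
  have "a \<noteq> 0" using False ak by auto
  have "int p ^ k \<noteq> 0" using p by (simp add: prime_gt_0_nat)
  have "pval p q = int (multiplicity (int p) a) - int (multiplicity (int p) (int p ^ k))"
    unfolding ak using p \<open>a \<noteq> 0\<close> \<open>int p ^ k \<noteq> 0\<close> by (rule pval_of_int_divide)
  with pval_nonneg_if_pnorm_le_1[OF p False le] p have "int p ^ k dvd a"
    by (intro multiplicity_dvd') simp
  then obtain c where "a = int p ^ k * c" by blast
  with ak p have "q = of_int c" by (simp add: prime_gt_0_nat)
  thus ?thesis by blast
qed (intro exI[of _ 0], simp)

section \<open>\<open>p\<close>-adic limits of matrix sequences\<close>

lemma padic_null_seq_zero: "padic_null_seq p (\<lambda>k. 0)"
  unfolding padic_null_seq_def by simp

lemma padic_null_seq_add: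
  assumes p: "prime p" and x: "padic_null_seq p x" and y: "padic_null_seq p y"
  shows "padic_null_seq p (\<lambda>k. x k + y k)"
  unfolding padic_null_seq_def
proof (intro allI impI)
  fix e :: real assume "e > 0"
  then obtain N1 N2 where "\<forall>k\<ge>N1. pnorm p (x k) < e" "\<forall>k\<ge>N2. pnorm p (y k) < e"
    using x y unfolding padic_null_seq_def by meson
  thus "\<exists>N. \<forall>k\<ge>N. pnorm p (x k + y k) < e"
    using pnorm_add_le_max[OF p] by (intro exI[of _ "max N1 N2"]) (fastforce intro: le_less_trans)
qed

lemma padic_null_seq_sum:
  assumes p: "prime p" and "\<And>l. l \<in> S \<Longrightarrow> padic_null_seq p (f l)"
  shows "padic_null_seq p (\<lambda>k. \<Sum>l\<in>S. f l k)"
  using assms(2)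
  by (induction S rule: infinite_finite_induct)
     (simp_all add: padic_null_seq_zero padic_null_seq_add[OF p])

lemma padic_null_seq_mult_bounded:
  assumes p: "prime p" and x: "padic_null_seq p x" and y: "\<exists>B N. \<forall>k\<ge>N. pnorm p (y k) \<le> B"
  shows "padic_null_seq p (\<lambda>k. x k * y k)"
  unfolding padic_null_seq_def
proof (intro allI impI)
  fix e :: real assume e: "e > 0"
  obtain B N0 where B0: "\<forall>k\<ge>N0. pnorm p (y k) \<le> B" using y by blast
  define B' where "B' = max B 1"
  have B': "B' > 0" "\<forall>k\<ge>N0. pnorm p (y k) \<le> B'" using B0 unfolding B'_def by force+
  obtain N1 where N1: "\<forall>k\<ge>N1. pnorm p (x k) < e / B'"
    using x e B' unfolding padic_null_seq_def by (meson divide_pos_pos)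
  show "\<exists>N. \<forall>k\<ge>N. pnorm p (x k * y k) < e"
  proof (intro exI[of _ "max N0 N1"] allI impI)
    fix k assume k: "k \<ge> max N0 N1"
    have "pnorm p (x k * y k) = pnorm p (x k) * pnorm p (y k)" by (rule pnorm_mult[OF p])
    also have "\<dots> \<le> pnorm p (x k) * B'" using k B' by (intro mult_left_mono) (auto simp: pnorm_nonneg)
    also have "\<dots> < e / B' * B'" using k N1 B' by (intro mult_strict_right_mono) auto
    finally show "pnorm p (x k * y k) < e" using B' by simp
  qed
qed

definition padic_bounded :: "nat \<Rightarrow> nat \<Rightarrow> nat \<Rightarrow> (nat \<Rightarrow> rat mat) \<Rightarrow> bool" where
  "padic_bounded p m n X \<longleftrightarrow> (\<exists>B N. \<forall>k\<ge>N. \<forall>i<m. \<forall>j<n. pnorm p (X k $$ (i, j)) \<le> B)"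

lemma padic_integral_imp_bounded: "padic_integral p m n X \<Longrightarrow> padic_bounded p m n X"
  unfolding padic_integral_def padic_bounded_def by blast

lemma padic_bounded_const: "padic_bounded p m n (\<lambda>k. A)"
  unfolding padic_bounded_def
proof (intro exI allI impI)
  fix k i j assume ij: "i < m" "j < n"
  have "pnorm p (A $$ (i, j)) \<le> (\<Sum>j<n. pnorm p (A $$ (i, j)))"
    using ij by (intro member_le_sum) (auto simp: pnorm_nonneg)
  also have "\<dots> \<le> (\<Sum>i<m. \<Sum>j<n. pnorm p (A $$ (i, j)))"
    using ij by (intro member_le_sum[of i]) (auto simp: pnorm_nonneg sum_nonneg)
  finally show "pnorm p (A $$ (i, j)) \<le> (\<Sum>i<m. \<Sum>j<n. pnorm p (A $$ (i, j)))" .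
qed

lemma padic_eq_sym:
  assumes "padic_eq p m n X Y"
  shows "padic_eq p m n Y X"
proof -
  have "pnorm p (Y k $$ (i, j) - X k $$ (i, j)) = pnorm p (X k $$ (i, j) - Y k $$ (i, j))" for k i j
    using pnorm_uminus[of p "X k $$ (i, j) - Y k $$ (i, j)"] by simp
  thus ?thesis using assms unfolding padic_eq_def padic_null_seq_def by simp
qed

lemma padic_eq_trans:
  assumes p: "prime p" and "padic_eq p m n X Y" "padic_eq p m n Y Z"
  shows "padic_eq p m n X Z"
  unfolding padic_eq_def
proof (intro allI impI)
  fix i j assume "i < m" "j < n"
  hence "padic_null_seq p (\<lambda>k. (X k $$ (i, j) - Y k $$ (i, j)) + (Y k $$ (i, j) - Z k $$ (i, j)))"
    using assms unfolding padic_eq_def by (intro padic_null_seq_add[OF p]) auto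
  thus "padic_null_seq p (\<lambda>k. X k $$ (i, j) - Z k $$ (i, j))" by simp
qed

lemma padic_eq_mult_right:
  assumes p: "prime p" and X: "\<And>k. X k \<in> carrier_mat m n" and Y: "\<And>k. Y k \<in> carrier_mat m n"
    and Z: "\<And>k. Z k \<in> carrier_mat n r"
    and e: "padic_eq p m n X Y" and b: "padic_bounded p n r Z"
  shows "padic_eq p m r (\<lambda>k. X k * Z k) (\<lambda>k. Y k * Z k)"
  unfolding padic_eq_def
proof (intro allI impI)
  fix i j assume ij: "i < m" "j < r"
  have "(X k * Z k) $$ (i, j) - (Y k * Z k) $$ (i, j)
          = (\<Sum>l<n. (X k $$ (i, l) - Y k $$ (i, l)) * Z k $$ (l, j))" for k
    using X[of k] Y[of k] Z[of k] ij
    by (simp add: scalar_prod_def atLeast0LessThan sum_subtractf[symmetric] algebra_simps)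
  moreover have "padic_null_seq p (\<lambda>k. \<Sum>l<n. (X k $$ (i, l) - Y k $$ (i, l)) * Z k $$ (l, j))"
    using e b ij unfolding padic_eq_def padic_bounded_def
    by (intro padic_null_seq_sum[OF p] padic_null_seq_mult_bounded[OF p]) blast+
  ultimately show "padic_null_seq p (\<lambda>k. (X k * Z k) $$ (i, j) - (Y k * Z k) $$ (i, j))" by simp
qed

lemma padic_eq_mult_left:
  assumes p: "prime p" and X: "\<And>k. X k \<in> carrier_mat n r" and Y: "\<And>k. Y k \<in> carrier_mat n r"
    and Z: "\<And>k. Z k \<in> carrier_mat m n"
    and e: "padic_eq p n r X Y" and b: "padic_bounded p m n Z"
  shows "padic_eq p m r (\<lambda>k. Z k * X k) (\<lambda>k. Z k * Y k)"
  unfolding padic_eq_def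
proof (intro allI impI)
  fix i j assume ij: "i < m" "j < r"
  have "(Z k * X k) $$ (i, j) - (Z k * Y k) $$ (i, j)
          = (\<Sum>l<n. (X k $$ (l, j) - Y k $$ (l, j)) * Z k $$ (i, l))" for k
    using X[of k] Y[of k] Z[of k] ij
    by (simp add: scalar_prod_def atLeast0LessThan sum_subtractf[symmetric] algebra_simps)
  moreover have "padic_null_seq p (\<lambda>k. \<Sum>l<n. (X k $$ (l, j) - Y k $$ (l, j)) * Z k $$ (i, l))"
    using e b ij unfolding padic_eq_def padic_bounded_def
    by (intro padic_null_seq_sum[OF p] padic_null_seq_mult_bounded[OF p]) blast+
  ultimately show "padic_null_seq p (\<lambda>k. (Z k * X k) $$ (i, j) - (Z k * Y k) $$ (i, j))" by simp
qed

lemma padic_integral_mult: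
  assumes p: "prime p" and X: "\<And>k. X k \<in> carrier_mat m n" and Y: "\<And>k. Y k \<in> carrier_mat n r"
    and "padic_integral p m n X" "padic_integral p n r Y"
  shows "padic_integral p m r (\<lambda>k. X k * Y k)"
proof -
  obtain N1 N2 where N1: "\<forall>k\<ge>N1. \<forall>i<m. \<forall>j<n. pnorm p (X k $$ (i, j)) \<le> 1"
    and N2: "\<forall>k\<ge>N2. \<forall>i<n. \<forall>j<r. pnorm p (Y k $$ (i, j)) \<le> 1"
    using assms(4,5) unfolding padic_integral_def by blast
  have "pnorm p ((X k * Y k) $$ (i, j)) \<le> 1" if "k \<ge> max N1 N2" "i < m" "j < r" for k i j
    using that X[of k] Y[of k] N1 N2
    by (auto simp: scalar_prod_def pnorm_mult[OF p] pnorm_nonneg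
             intro!: pnorm_sum_le[OF p] mult_le_one)
  thus ?thesis unfolding padic_integral_def by blast
qed

lemma padic_integral_transpose:
  assumes "\<And>k. X k \<in> carrier_mat m n" "padic_integral p m n X"
  shows "padic_integral p n m (\<lambda>k. transpose_mat (X k))"
proof -
  obtain N where N: "\<forall>k\<ge>N. \<forall>i<m. \<forall>j<n. pnorm p (X k $$ (i, j)) \<le> 1"
    using assms(2) unfolding padic_integral_def by blast
  have "pnorm p (transpose_mat (X k) $$ (i, j)) \<le> 1" if "k \<ge> N" "i < n" "j < m" for k i j
    using that N assms(1)[of k] by auto
  thus ?thesis unfolding padic_integral_def by blast
qed

lemma padic_integral_of_int:
  assumes p: "prime p" and "G \<in> carrier_mat m n"
  shows "padic_integral p m n (\<lambda>k. map_mat rat_of_int G)"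
  using assms pnorm_of_int_le_1[OF p] unfolding padic_integral_def by auto

lemma pnorm_le_1_if_padic_eq_integral:
  assumes p: "prime p" and e: "padic_eq p m n (\<lambda>k. A) T" and T: "padic_integral p m n T"
    and ij: "i < m" "j < n"
  shows "pnorm p (A $$ (i, j)) \<le> 1"
proof -
  obtain N1 where N1: "\<forall>k\<ge>N1. pnorm p (T k $$ (i, j)) \<le> 1"
    using T ij unfolding padic_integral_def by blast
  have "padic_null_seq p (\<lambda>k. A $$ (i, j) - T k $$ (i, j))"
    using e ij unfolding padic_eq_def by blast
  from this[unfolded padic_null_seq_def, rule_format, of 1]
  obtain N2 where N2: "\<forall>k\<ge>N2. pnorm p (A $$ (i, j) - T k $$ (i, j)) < 1" by auto
  define k where "k = max N1 N2"
  have "pnorm p (A $$ (i, j)) = pnorm p ((A $$ (i, j) - T k $$ (i, j)) + T k $$ (i, j))" by simp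
  also have "\<dots> \<le> max (pnorm p (A $$ (i, j) - T k $$ (i, j))) (pnorm p (T k $$ (i, j)))"
    by (rule pnorm_add_le_max[OF p])
  also have "\<dots> \<le> 1"
    using N1[rule_format, of k] N2[rule_format, of k] by (simp add: k_def)
  finally show ?thesis .
qed

lemma int_mat_if_padic_eq_integral:
  assumes p: "prime p" and A: "A \<in> carrier_mat m n"
    and Z: "\<forall>i<m. \<forall>j<n. in_Zinvp p (A $$ (i, j))"
    and e: "padic_eq p m n (\<lambda>k. A) T" and T: "padic_integral p m n T"
  shows "\<exists>M. M \<in> carrier_mat m n \<and> A = map_mat rat_of_int M"
proof (intro exI conjI)
  have int: "A $$ (i, j) = of_int \<lfloor>A $$ (i, j)\<rfloor>" if "i < m" "j < n" for i j
    using in_Zinvp_pnorm_le_1_imp_int[OF p] pnorm_le_1_if_padic_eq_integral[OF p e T] Z that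
    by fastforce
  show "A = map_mat rat_of_int (mat m n (\<lambda>(i, j). \<lfloor>A $$ (i, j)\<rfloor>))"
    using A int by (auto intro!: eq_matI)
qed simp

section \<open>The two decompositions\<close>

lemma SO_Zp_carrier: "SO_Zp p d c \<Longrightarrow> c k \<in> carrier_mat d d"
  unfolding SO_Zp_def SO_Qp_def padic_cauchy_def by auto

lemma H_Qp_carrier: "H_Qp p d v h \<Longrightarrow> h k \<in> carrier_mat d d"
  unfolding H_Qp_def SO_Qp_def padic_cauchy_def by auto

lemma ASL_Zp_carrier: "ASL_Zp p d c \<Longrightarrow> c k \<in> carrier_mat d d"
  unfolding ASL_Zp_def ASL_Qp_def padic_cauchy_def by auto

lemma SO_Zp_transpose_integral:
  assumes "SO_Zp p d c"
  shows "padic_integral p d d (\<lambda>k. transpose_mat (c k))"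
  using assms SO_Zp_carrier[OF assms] unfolding SO_Zp_def by (intro padic_integral_transpose) auto

lemma padic_eq_SO_Zp_decomposition:
  assumes p: "prime p" and c: "SO_Zp p d c" and \<gamma>: "\<gamma> \<in> carrier_mat d d"
    and h: "\<And>k. h k \<in> carrier_mat d d" and dec: "padic_eq p d d h (\<lambda>k. c k * \<gamma>)"
  shows "padic_eq p d d (\<lambda>k. \<gamma>) (\<lambda>k. transpose_mat (c k) * h k)"
proof -
  note cc = SO_Zp_carrier[OF c]
  have cTc: "\<And>k. transpose_mat (c k) \<in> carrier_mat d d" using cc by simp
  have orth: "padic_eq p d d (\<lambda>k. 1\<^sub>m d) (\<lambda>k. transpose_mat (c k) * c k)"
    by (rule padic_eq_sym) (use c in \<open>simp add: SO_Zp_def SO_Qp_def\<close>)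
  have "padic_eq p d d (\<lambda>k. 1\<^sub>m d * \<gamma>) (\<lambda>k. transpose_mat (c k) * c k * \<gamma>)"
    using cc \<gamma> by (intro padic_eq_mult_right[OF p _ _ _ orth padic_bounded_const])
      (auto intro: mult_carrier_mat[of _ d d _ d])
  moreover have "(\<lambda>k. 1\<^sub>m d * \<gamma>) = (\<lambda>k. \<gamma>)" using \<gamma> by simp
  moreover have "(\<lambda>k. transpose_mat (c k) * c k * \<gamma>) = (\<lambda>k. transpose_mat (c k) * (c k * \<gamma>))"
    using cc cTc \<gamma> by (simp add: assoc_mult_mat[of _ d d _ d _ d])
  moreover have "padic_eq p d d (\<lambda>k. transpose_mat (c k) * (c k * \<gamma>)) (\<lambda>k. transpose_mat (c k) * h k)"
    using cc cTc \<gamma> h SO_Zp_transpose_integral[OF c]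
    by (intro padic_eq_mult_left[OF p _ _ _ padic_eq_sym[OF dec] padic_integral_imp_bounded])
      (auto intro: mult_carrier_mat[of _ d d _ d])
  ultimately show ?thesis by (metis padic_eq_trans[OF p])
qed

lemma padic_eq_conjugate_decomposition:
  assumes p: "prime p"
    and G: "G \<in> carrier_mat d d" "Gi \<in> carrier_mat d d" "G * Gi = 1\<^sub>m d"
    and \<gamma>: "\<gamma> \<in> carrier_mat d d" "\<gamma>i \<in> carrier_mat d d" "\<gamma>i * \<gamma> = 1\<^sub>m d"
    and h: "\<And>k. h k \<in> carrier_mat d d" and c: "\<And>k. c k \<in> carrier_mat d d"
    and dec: "padic_eq p d d (\<lambda>k. Gi * h k * G) (\<lambda>k. c k * \<gamma>i)"
  shows "padic_eq p d d (\<lambda>k. h k * (G * \<gamma>)) (\<lambda>k. G * c k)"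
proof -
  have "padic_eq p d d (\<lambda>k. G * (Gi * h k * G)) (\<lambda>k. G * (c k * \<gamma>i))"
    using G \<gamma> h c by (intro padic_eq_mult_left[OF p _ _ _ dec padic_bounded_const])
      (auto intro: mult_carrier_mat[of _ d d _ d])
  hence "padic_eq p d d (\<lambda>k. G * (Gi * h k * G) * \<gamma>) (\<lambda>k. G * (c k * \<gamma>i) * \<gamma>)"
    using G \<gamma> h c by (intro padic_eq_mult_right[OF p _ _ _ _ padic_bounded_const])
      (auto intro: mult_carrier_mat[of _ d d _ d])
  moreover have "G * (Gi * h k * G) * \<gamma> = h k * (G * \<gamma>)" for k
  proof -
    have "G * (Gi * h k * G) * \<gamma> = (G * Gi) * (h k * (G * \<gamma>))"
      using G(1,2) \<gamma>(1) h[of k] by (simp add: assoc_mult_mat[of _ d d _ d _ d])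
    also have "\<dots> = h k * (G * \<gamma>)"
      using G \<gamma> h[of k] by (metis left_mult_one_mat mult_carrier_mat)
    finally show ?thesis .
  qed
  moreover have "G * (c k * \<gamma>i) * \<gamma> = G * c k" for k
  proof -
    have "G * (c k * \<gamma>i) * \<gamma> = (G * c k) * (\<gamma>i * \<gamma>)"
      using G(1) \<gamma>(1,2) c[of k] by (simp add: assoc_mult_mat[of _ d d _ d _ d])
    also have "\<dots> = G * c k"
      using G \<gamma> c[of k] by (metis right_mult_one_mat mult_carrier_mat)
    finally show ?thesis .
  qed
  ultimately show ?thesis by simp
qed

lemma padic_eq_product_of_decompositions:
  assumes p: "prime p"
    and c1: "SO_Zp p d c1" and \<gamma>1: "\<gamma>1 \<in> carrier_mat d d"
    and h: "\<And>k. h k \<in> carrier_mat d d" and dec1: "padic_eq p d d h (\<lambda>k. c1 k * \<gamma>1)"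
    and G: "G \<in> carrier_mat d d" "Gi \<in> carrier_mat d d" "G * Gi = 1\<^sub>m d"
    and \<gamma>2: "\<gamma>2 \<in> carrier_mat d d" "\<gamma>2i \<in> carrier_mat d d" "\<gamma>2i * \<gamma>2 = 1\<^sub>m d"
    and c2: "\<And>k. c2 k \<in> carrier_mat d d"
    and dec2: "padic_eq p d d (\<lambda>k. Gi * h k * G) (\<lambda>k. c2 k * \<gamma>2i)"
  shows "padic_eq p d d (\<lambda>k. \<gamma>1 * G * \<gamma>2) (\<lambda>k. transpose_mat (c1 k) * G * c2 k)"
proof -
  define C where "C k = transpose_mat (c1 k)" for k
  have C: "\<And>k. C k \<in> carrier_mat d d" unfolding C_def using SO_Zp_carrier[OF c1] by simp
  have "padic_eq p d d (\<lambda>k. \<gamma>1 * (G * \<gamma>2)) (\<lambda>k. C k * h k * (G * \<gamma>2))"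
    using padic_eq_SO_Zp_decomposition[OF p c1 \<gamma>1 h dec1, folded C_def] C h G \<gamma>1 \<gamma>2
    by (intro padic_eq_mult_right[OF p _ _ _ _ padic_bounded_const])
      (auto intro: mult_carrier_mat[of _ d d _ d])
  moreover have "\<gamma>1 * (G * \<gamma>2) = \<gamma>1 * G * \<gamma>2" "C k * h k * (G * \<gamma>2) = C k * (h k * (G * \<gamma>2))" for k
    using C h G \<gamma>1 \<gamma>2 by (simp_all add: assoc_mult_mat[of _ d d _ d _ d])
  ultimately have left: "padic_eq p d d (\<lambda>k. \<gamma>1 * G * \<gamma>2) (\<lambda>k. C k * (h k * (G * \<gamma>2)))"
    by simp
  have "padic_eq p d d (\<lambda>k. C k * (h k * (G * \<gamma>2))) (\<lambda>k. C k * (G * c2 k))"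
    using padic_eq_conjugate_decomposition[OF p G \<gamma>2 h c2 dec2] C h G \<gamma>2 c2
      SO_Zp_transpose_integral[OF c1, folded C_def]
    by (intro padic_eq_mult_left[OF p _ _ _ _ padic_integral_imp_bounded])
      (auto intro: mult_carrier_mat[of _ d d _ d])
  moreover have "C k * (G * c2 k) = C k * G * c2 k" for k
    using C G c2 by (simp add: assoc_mult_mat[of _ d d _ d _ d])
  ultimately have right: "padic_eq p d d (\<lambda>k. C k * (h k * (G * \<gamma>2))) (\<lambda>k. C k * G * c2 k)"
    by simp
  show ?thesis using padic_eq_trans[OF p left right] unfolding C_def .
qed

theorem lemma3p2:
  fixes d p :: nat and v :: "int vec" and gv :: "int mat" and gvi :: "rat mat"
    and h c1 c2 :: "nat \<Rightarrow> rat mat" and \<gamma>1 \<gamma>2 \<gamma>2i :: "rat mat"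
  assumes prim: "primitive_vec d v"
    and p: "prime p"
    and gv: "is_gv d v gv"
    and gvi: "gvi \<in> carrier_mat d d" "gvi * map_mat rat_of_int gv = 1\<^sub>m d"
             "map_mat rat_of_int gv * gvi = 1\<^sub>m d"
    and h: "H_Qp p d v h"
    and c1: "SO_Zp p d c1" and \<gamma>1: "SO_Zinvp p d \<gamma>1"
    and dec1: "padic_eq p d d h (\<lambda>k. c1 k * \<gamma>1)"
    and c2: "ASL_Zp p d c2" and \<gamma>2: "ASL_Zinvp p d \<gamma>2"
    and \<gamma>2i: "\<gamma>2i \<in> carrier_mat d d" "\<gamma>2 * \<gamma>2i = 1\<^sub>m d" "\<gamma>2i * \<gamma>2 = 1\<^sub>m d"
    and dec2: "padic_eq p d d (\<lambda>k. gvi * h k * map_mat rat_of_int gv) (\<lambda>k. c2 k * \<gamma>2i)"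
  shows "\<exists>M :: int mat. M \<in> carrier_mat d d \<and> det M = 1 \<and>
           \<gamma>1 * map_mat rat_of_int gv * \<gamma>2 = map_mat rat_of_int M"
proof -
  define G where "G = map_mat rat_of_int gv"
  have gvc: "gv \<in> carrier_mat d d" and "det gv = 1" using gv unfolding is_gv_def by auto
  hence G: "G \<in> carrier_mat d d" "det G = 1" unfolding G_def by (simp_all add: of_int_hom.hom_det)
  have \<gamma>1c: "\<gamma>1 \<in> carrier_mat d d" and \<gamma>2c: "\<gamma>2 \<in> carrier_mat d d"
    using \<gamma>1 \<gamma>2 unfolding SO_Zinvp_def ASL_Zinvp_def by auto
  have \<gamma>1G: "\<gamma>1 * G \<in> carrier_mat d d" using \<gamma>1c G(1) by (rule mult_carrier_mat)
  have "padic_eq p d d (\<lambda>k. \<gamma>1 * G * \<gamma>2) (\<lambda>k. transpose_mat (c1 k) * G * c2 k)"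
    using padic_eq_product_of_decompositions[OF p c1 \<gamma>1c H_Qp_carrier[OF h] dec1
        G(1) gvi(1) gvi(3)[folded G_def] \<gamma>2c \<gamma>2i(1,3) ASL_Zp_carrier[OF c2] dec2[folded G_def]] .
  moreover have "padic_integral p d d (\<lambda>k. transpose_mat (c1 k) * G * c2 k)"
    using SO_Zp_carrier[OF c1] ASL_Zp_carrier[OF c2] G(1) gvc c2 SO_Zp_transpose_integral[OF c1]
    unfolding ASL_Zp_def G_def
    by (intro padic_integral_mult[OF p] padic_integral_of_int[OF p])
      (auto intro: mult_carrier_mat[of _ d d _ d])
  moreover have "\<forall>i<d. \<forall>j<d. in_Zinvp p ((\<gamma>1 * G * \<gamma>2) $$ (i, j))"
    using \<gamma>1 \<gamma>2 gvc unfolding SO_Zinvp_def ASL_Zinvp_def G_def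
    by (intro in_Zinvp_mat_mult[OF p \<gamma>1G[unfolded G_def] \<gamma>2c] in_Zinvp_mat_mult[OF p \<gamma>1c])
      (auto simp: in_Zinvp_of_int)
  ultimately obtain M where M: "M \<in> carrier_mat d d" "\<gamma>1 * G * \<gamma>2 = map_mat rat_of_int M"
    using int_mat_if_padic_eq_integral[OF p mult_carrier_mat[OF \<gamma>1G \<gamma>2c]] by blast
  have "rat_of_int (det M) = det (\<gamma>1 * G * \<gamma>2)" unfolding M(2) by simp
  also have "\<dots> = det \<gamma>1 * det G * det \<gamma>2" by (simp add: det_mult[OF \<gamma>1G \<gamma>2c] det_mult[OF \<gamma>1c G(1)])
  also have "\<dots> = 1" using G(2) \<gamma>1 \<gamma>2 unfolding SO_Zinvp_def ASL_Zinvp_def by simp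
  finally show ?thesis using M unfolding G_def by auto
qed

end
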